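(* In the setting described in the context, assume A1, A2 and A3. If there exists $k^\star\in\{1,\dots,K\}$ with $\inf_{\mathbf w\in\mathcal W^*}w_{k^\star}>\frac12$, then $\liminf_{n\to\infty}\Pr\big(Y\in\mathcal C_{\mathrm{comb}}(\mathbf X;\mathcal D_n)\big)\ge1-\alpha$.
   Context: Setting: fix $K\ge2$ and $\alpha\in(0,1)$. For each sample size $n$, on a common probability space there are a random data set $\mathcal D_n$ and a random test pair $(\mathbf X,Y)$ with $\mathbf X\in\mathcal X\subseteq\mathbb R^p$, $Y\in\mathbb R$. For each $k\in\{1,\dots,K\}$ there is a random prediction set $\mathcal C_k(\mathbf X;\mathcal D_n)\subseteq\mathbb R$, determined by $\mathcal D_n$ and $\mathbf X$, such that the events $\{Y\in\mathcal C_k(\mathbf X;\mathcal D_n)\}$ are measurable. Let $\Delta^{K-1}=\{\mathbf w\in[0,1]^K:w_k\ge0,\sum_k w_k=1\}$ and let $\widehat{\mathbf w}_n=(\widehat w_{n,1},\dots,\widehat w_{n,K})$ be a $\sigma(\mathcal D_n)$-measurable random vector in $\Delta^{K-1}$. Let $\mathcal W^*\subseteq\Delta^{K-1}$ be a nonempty closed convex set; $\|\cdot\|$ is the Euclidean norm. A1: for every $n$ and every $k$, $\Pr(Y\notin\mathcal C_k(\mathbf X;\mathcal D_n)\mid\mathcal D_n)\le\alpha$ almost surely. A2: $\inf_{\mathbf w\in\mathcal W^*}\|\widehat{\mathbf w}_n-\mathbf w\|\to0$ in probability as $n\to\infty$. A3: $\mathcal C_{\mathrm{comb}}(\mathbf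 X;\mathcal D_n):=\{y\in\mathbb R:\sum_{k=1}^K\widehat w_{n,k}\mathbf 1\{y\in\mathcal C_k(\mathbf X;\mathcal D_n)\}>1/2\}$. *)

theory Defs
  imports "HOL-Analysis.Analysis" "HOL-Probability.Probability"
begin

definition prob_simplex :: "(real^'K) set" where
  "prob_simplex = {w. (\<forall>k. 0 \<le> w $ k) \<and> (\<Sum>k\<in>UNIV. w $ k) = 1}"

definition comb_set :: "real^'K \<Rightarrow> ('K \<Rightarrow> real set) \<Rightarrow> real set" where
  "comb_set w C = {y. (\<Sum>k\<in>UNIV. w $ k * (if y \<in> C k then 1 else 0)) > 1/2}"

end

theory Submission
  imports Defs
begin

text \<open>Each coordinate is 1-Lipschitz, so once the weights are close to \<open>Wstar\<close> the weight of
  \<open>k\<^sup>\<star>\<close> exceeds 1/2: the \<open>k\<^sup>\<star>\<close>-th set alone outvotes all others and lies inside the combined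
  set. Hence the combined set misses \<open>Y\<close> only where the \<open>k\<^sup>\<star>\<close>-th set does, which has
  probability at most \<open>\<alpha>\<close> once the conditional bound A1 is integrated, or where the weights are
  still far from \<open>Wstar\<close>, which has vanishing probability by A2.\<close>

lemma subalgebra_vimage_algebra:
  assumes "f \<in> measurable M N"
  shows "subalgebra M (vimage_algebra (space M) f N)"
proof -
  have id_meas: "(\<lambda>x. x) \<in> measurable M (vimage_algebra (space M) f N)"
    by (rule measurable_vimage_algebra2) (use assms in auto)
  have "A \<in> sets M" if "A \<in> sets (vimage_algebra (space M) f N)" for A
    using measurable_sets[OF id_meas that] sets.sets_into_space[OF that]
    by (simp add: Int_absorb2)
  then show ?thesis
    unfolding subalgebra_def by auto
qed

lemma (in prob_space) prob_ge_if_AE_real_cond_exp_compl_le: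
  assumes F: "subalgebra M F" and P: "{\<omega> \<in> space M. P \<omega>} \<in> sets M"
    and bound: "AE \<omega> in M. real_cond_exp M F (indicator {\<omega> \<in> space M. \<not> P \<omega>}) \<omega> \<le> \<alpha>"
  shows "1 - \<alpha> \<le> prob {\<omega> \<in> space M. P \<omega>}"
proof -
  interpret F: finite_measure_subalgebra M F
    using F by (simp add: finite_measure_subalgebra_def finite_measure_subalgebra_axioms_def
        finite_measure_axioms)
  define A where "A = {\<omega> \<in> space M. \<not> P \<omega>}"
  have A_eq: "A = space M - {\<omega> \<in> space M. P \<omega>}"
    by (auto simp: A_def)
  have A_M: "A \<in> sets M"
    using P by (simp add: A_eq sets.compl_sets)
  have int: "integrable M (indicator A :: 'a \<Rightarrow> real)"
    using A_M by (simp add: emeasure_eq_measure)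
  have "prob A = (\<integral>\<omega>. indicator A \<omega> \<partial>M)"
    using A_M by simp
  also have "\<dots> = (\<integral>\<omega>. real_cond_exp M F (indicator A) \<omega> \<partial>M)"
    using F.real_cond_exp_int(2)[OF int] by simp
  also have "\<dots> \<le> (\<integral>\<omega>. \<alpha> \<partial>M)"
    using F.real_cond_exp_int(1)[OF int] bound by (intro integral_mono_AE) (auto simp: A_def)
  also have "\<dots> = \<alpha>"
    by (simp add: prob_space)
  finally show ?thesis
    using prob_compl[OF P] by (simp add: A_eq)
qed

lemma (in finite_measure) liminf_measure_ge_if_covered:
  assumes S: "\<And>n. p \<le> measure M (S n)"
    and cover: "\<And>n. S n \<subseteq> G n \<union> B n"
    and G: "\<And>n. G n \<in> sets M" and B: "\<And>n. B n \<in> sets M"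
    and B_null: "(\<lambda>n. measure M (B n)) \<longlonglongrightarrow> 0"
  shows "ereal p \<le> liminf (\<lambda>n. ereal (measure M (G n)))"
proof -
  have lower: "p - measure M (B n) \<le> measure M (G n)" for n
  proof -
    have "measure M (S n) \<le> measure M (G n \<union> B n)"
      using cover G B by (intro finite_measure_mono) auto
    also have "\<dots> \<le> measure M (G n) + measure M (B n)"
      using G B by (rule measure_Un_le)
    finally show ?thesis
      using S[of n] by simp
  qed
  have "(\<lambda>n. ereal (p - measure M (B n))) \<longlonglongrightarrow> ereal p"
    using tendsto_diff[OF tendsto_const B_null, of p] by (simp add: tendsto_ereal)
  then have "ereal p = liminf (\<lambda>n. ereal (p - measure M (B n)))"
    by (rule lim_imp_Liminf[OF trivial_limit_sequentially, symmetric])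
  also have "\<dots> \<le> liminf (\<lambda>n. ereal (measure M (G n)))"
    using lower by (intro Liminf_mono) auto
  finally show ?thesis .
qed

lemma Inf_vec_nth_le_add_infdist:
  fixes w :: "real^'n"
  assumes "W \<noteq> {}" and bdd: "bdd_below ((\<lambda>v. v $ k) ` W)"
  shows "Inf ((\<lambda>v. v $ k) ` W) \<le> w $ k + infdist w W"
proof -
  have "Inf ((\<lambda>v. v $ k) ` W) - w $ k \<le> dist w v" if "v \<in> W" for v
  proof -
    have "Inf ((\<lambda>v. v $ k) ` W) \<le> v $ k"
      using bdd that by (auto intro: cInf_lower)
    moreover have "\<bar>w $ k - v $ k\<bar> \<le> dist w v"
      by (metis dist_real_def dist_vec_nth_le)
    ultimately show ?thesis
      by linarith
  qed
  then have "Inf ((\<lambda>v. v $ k) ` W) - w $ k \<le> infdist w W"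
    using \<open>W \<noteq> {}\<close> by (simp add: infdist_notempty cINF_greatest)
  then show ?thesis
    by simp
qed

lemma mem_comb_set_if_infdist_less:
  assumes w: "w \<in> prob_simplex" and W: "W \<subseteq> prob_simplex" "W \<noteq> {}"
    and near: "infdist w W < Inf ((\<lambda>v. v $ k) ` W) - 1/2" and y: "y \<in> C k"
  shows "y \<in> comb_set w C"
proof -
  have "bdd_below ((\<lambda>v. v $ k) ` W)"
    using W(1) by (auto simp: prob_simplex_def intro!: bdd_belowI[where m = 0])
  then have "1/2 < w $ k"
    using Inf_vec_nth_le_add_infdist[OF W(2), of k w] near by linarith
  moreover have "w $ k * (if y \<in> C k then 1 else 0)
      \<le> (\<Sum>j\<in>UNIV. w $ j * (if y \<in> C j then 1 else 0))"
    using w by (intro member_le_sum) (auto simp: prob_simplex_def)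
  ultimately show ?thesis
    using y by (simp add: comb_set_def)
qed

lemma measurable_comb_set:
  fixes w :: "'a \<Rightarrow> real^'K::finite"
  assumes w: "w \<in> borel_measurable M"
    and C: "\<And>k. {\<omega> \<in> space M. y \<omega> \<in> C \<omega> k} \<in> sets M"
  shows "{\<omega> \<in> space M. y \<omega> \<in> comb_set (w \<omega>) (C \<omega>)} \<in> sets M"
proof -
  define vote where
    "vote \<omega> = (\<Sum>k\<in>UNIV. w \<omega> $ k * indicator {\<omega> \<in> space M. y \<omega> \<in> C \<omega> k} \<omega>)" for \<omega>
  have "(\<lambda>\<omega>. w \<omega> $ k) \<in> borel_measurable M" for k
    by (intro borel_measurable_continuous_on[where f = "\<lambda>x. x $ k", OF _ w] continuous_intros)
  then have "vote \<in> borel_measurable M"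
    unfolding vote_def using C
    by (intro borel_measurable_sum borel_measurable_times borel_measurable_indicator) auto
  moreover have "{\<omega> \<in> space M. y \<omega> \<in> comb_set (w \<omega>) (C \<omega>)} = {\<omega> \<in> space M. 1/2 < vote \<omega>}"
  proof -
    have "vote \<omega> = (\<Sum>k\<in>UNIV. w \<omega> $ k * (if y \<omega> \<in> C \<omega> k then 1 else 0))"
      if "\<omega> \<in> space M" for \<omega>
      unfolding vote_def using that by (intro sum.cong) (auto simp: indicator_def)
    then show ?thesis
      unfolding comb_set_def by auto
  qed
  ultimately show ?thesis
    by simp
qed

theorem theorem2:
  fixes M :: "'a measure"
    and N :: "nat \<Rightarrow> 'd measure"
    and D :: "nat \<Rightarrow> 'a \<Rightarrow> 'd"
    and X :: "'a \<Rightarrow> 'x"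
    and Y :: "'a \<Rightarrow> real"
    and C :: "nat \<Rightarrow> 'K::finite \<Rightarrow> 'd \<Rightarrow> 'x \<Rightarrow> real set"
    and what :: "nat \<Rightarrow> 'a \<Rightarrow> real^'K"
    and Wstar :: "(real^'K) set"
    and \<alpha> :: real
  assumes "prob_space M"
    and K2: "CARD('K) \<ge> 2"
    and alpha: "0 < \<alpha>" "\<alpha> < 1"
    and D_meas: "\<And>n. D n \<in> measurable M (N n)"
    and C_meas: "\<And>n k. {\<omega> \<in> space M. Y \<omega> \<in> C n k (D n \<omega>) (X \<omega>)} \<in> sets M"
    and what_meas: "\<And>n. what n \<in> borel_measurable (vimage_algebra (space M) (D n) (N n))"
    and what_simplex: "\<And>n \<omega>. \<omega> \<in> space M \<Longrightarrow> what n \<omega> \<in> prob_simplex"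
    and W_ne: "Wstar \<noteq> {}" and W_closed: "closed Wstar" and W_convex: "convex Wstar"
    and W_sub: "Wstar \<subseteq> prob_simplex"
    and A1: "\<And>n k. AE \<omega> in M.
              real_cond_exp M (vimage_algebra (space M) (D n) (N n))
                (indicator {\<omega> \<in> space M. Y \<omega> \<notin> C n k (D n \<omega>) (X \<omega>)}) \<omega> \<le> \<alpha>"
    and A2: "\<And>\<epsilon>. \<epsilon> > 0 \<Longrightarrow>
              (\<lambda>n. measure M {\<omega> \<in> space M. infdist (what n \<omega>) Wstar > \<epsilon>}) \<longlonglongrightarrow> 0"
    and kstar: "\<exists>k. Inf ((\<lambda>w. w $ k) ` Wstar) > 1/2"
  shows "liminf (\<lambda>n. ereal (measure M
            {\<omega> \<in> space M. Y \<omega> \<in> comb_set (what n \<omega>) (\<lambda>k. C n k (D n \<omega>) (X \<omega>))}))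
         \<ge> ereal (1 - \<alpha>)"
proof -
  interpret prob_space M by fact
  obtain k where k: "1/2 < Inf ((\<lambda>w. w $ k) ` Wstar)"
    using kstar by blast
  define \<epsilon> where "\<epsilon> = (Inf ((\<lambda>w. w $ k) ` Wstar) - 1/2) / 2"
  define covered where "covered n = {\<omega> \<in> space M. Y \<omega> \<in> C n k (D n \<omega>) (X \<omega>)}" for n
  define good where
    "good n = {\<omega> \<in> space M. Y \<omega> \<in> comb_set (what n \<omega>) (\<lambda>k. C n k (D n \<omega>) (X \<omega>))}" for n
  define far where "far n = {\<omega> \<in> space M. infdist (what n \<omega>) Wstar > \<epsilon>}" for n
  have what_M: "what n \<in> borel_measurable M" for n
    using measurable_from_subalg[OF subalgebra_vimage_algebra[OF D_meas] what_meas] .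
  have "1 - \<alpha> \<le> prob (covered n)" for n
    unfolding covered_def
    by (rule prob_ge_if_AE_real_cond_exp_compl_le[OF subalgebra_vimage_algebra[OF D_meas] C_meas A1])
  moreover have "covered n \<subseteq> good n \<union> far n" for n
    using what_simplex k
    by (auto simp: covered_def good_def far_def \<epsilon>_def
        intro: mem_comb_set_if_infdist_less[OF _ W_sub W_ne, where k = k])
  moreover have "good n \<in> sets M" for n
    unfolding good_def using what_M C_meas by (rule measurable_comb_set)
  moreover have "far n \<in> sets M" for n
    unfolding far_def
    by (intro borel_measurable_less borel_measurable_const continuous_intros
        borel_measurable_continuous_on[where f = "\<lambda>x. infdist x Wstar", OF _ what_M])
  moreover have "(\<lambda>n. prob (far n)) \<longlonglongrightarrow> 0"
    unfolding far_def using k by (intro A2) (simp add: \<epsilon>_def)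
  ultimately have "ereal (1 - \<alpha>) \<le> liminf (\<lambda>n. ereal (prob (good n)))"
    by (rule liminf_measure_ge_if_covered)
  then show ?thesis
    by (simp add: good_def)
qed

end
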